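(* Let $\gamma:[0,1]\to\mathbb{R}^{d}$ be a rationally non-degenerate analytic curve of order $\kappa\in\mathbb{N}$ (so $\kappa<\infty$). Then there exists a sequence $\{\rho_{n}\}_{n=1}^{\infty}$ satisfying $n^{\kappa}\leq\rho_{n}\leq n^{(\kappa+1)^{2}}$ for all $n\in\mathbb{N}$ such that the sequence of probability measures \[ \mu_{n}=\frac{1}{n}\sum_{k=1}^{n}\delta_{\pi(\rho_{n}\gamma(k/n))} \] on $\mathbb{T}^{d}=\mathbb{R}^{d}/\mathbb{Z}^{d}$ does not equidistribute.
   Context: $\pi:\mathbb{R}^{d}\to\mathbb{R}^{d}/\mathbb{Z}^{d}$ is the natural projection. A sequence of probability measures $\mu_n$ on $\mathbb{T}^d$ equidistributes if $\lim_{n\to\infty}\mu_{n}(f)=\int_{\mathbb{T}^{d}}f\,d\mathbf{x}$ for all continuous $f$ on $\mathbb{T}^{d}$, where $d\mathbf{x}$ is normalized Haar measure. "Analytic" means real analytic (on a neighbourhood of $[0,1]$). For a smooth curve $\gamma:[0,1]\to\mathbb{R}^{d}$ and $j\in\mathbb{N}$, $\gamma^{(j)}$ denotes the componentwise $j$-th derivative. $\gamma$ is rationally non-degenerate of order $\kappa\in\mathbb{N}\cup\{\infty\}$ if $\kappa=\sup\{j\in\mathbb{N}: \text{for every }\mathbf{h}\in\mathbb{Z}^{d}\setminus\{\mathbf{0}\},\ t\mapsto\langle\mathbf{h},\gamma^{(j)}(t)\rangle\text{ is not identically zero}\}$. *)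

theory Defs
  imports "HOL-Analysis.Analysis"
begin

definition real_analytic_on :: "(real \<Rightarrow> real) \<Rightarrow> real set \<Rightarrow> bool" where
  "real_analytic_on f S \<longleftrightarrow>
     (\<forall>x\<in>S. \<exists>r>0. \<exists>a::nat \<Rightarrow> real. \<forall>y. \<bar>y - x\<bar> < r \<longrightarrow> (\<lambda>n. a n * (y - x) ^ n) sums f y)"

definition analytic_curve :: "(real \<Rightarrow> real ^ 'd) \<Rightarrow> bool" where
  "analytic_curve \<gamma> \<longleftrightarrow>
     (\<exists>U. open U \<and> {0..1} \<subseteq> U \<and> (\<forall>i. real_analytic_on (\<lambda>t. \<gamma> t $ i) U))"

definition curve_deriv :: "nat \<Rightarrow> (real \<Rightarrow> real ^ 'd) \<Rightarrow> real \<Rightarrow> real ^ 'd" where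
  "curve_deriv j \<gamma> t = (\<chi> i. (deriv ^^ j) (\<lambda>s. \<gamma> s $ i) t)"

definition nondeg_at :: "(real \<Rightarrow> real ^ 'd) \<Rightarrow> nat \<Rightarrow> bool" where
  "nondeg_at \<gamma> j \<longleftrightarrow>
     (\<forall>h :: int ^ 'd. h \<noteq> 0 \<longrightarrow>
        \<not> (\<forall>t\<in>{0..1}. (\<chi> i. real_of_int (h $ i)) \<bullet> curve_deriv j \<gamma> t = 0))"

definition rat_nondeg_order :: "(real \<Rightarrow> real ^ 'd) \<Rightarrow> nat \<Rightarrow> bool" where
  "rat_nondeg_order \<gamma> \<kappa> \<longleftrightarrow>
     \<kappa> \<ge> 1 \<and> nondeg_at \<gamma> \<kappa> \<and> (\<forall>j>\<kappa>. \<not> nondeg_at \<gamma> j)"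

text \<open>Continuous functions on the torus R^d/Z^d = continuous Z^d-periodic functions on R^d.\<close>
definition torus_periodic :: "(real ^ 'd \<Rightarrow> real) \<Rightarrow> bool" where
  "torus_periodic f \<longleftrightarrow> (\<forall>x. \<forall>h :: int ^ 'd. f (x + (\<chi> i. real_of_int (h $ i))) = f x)"

text \<open>Equidistribution of a sequence of empirical measures (1/n) sum_{k=1}^n delta_{pi(x n k)}
  against normalized Haar measure (= Lebesgue measure on the unit cube).\<close>
definition equidistributes :: "(nat \<Rightarrow> nat \<Rightarrow> real ^ 'd) \<Rightarrow> bool" where
  "equidistributes x \<longleftrightarrow>
     (\<forall>f. continuous_on UNIV f \<and> torus_periodic f \<longrightarrow>
        ((\<lambda>n. (1 / real n) * (\<Sum>k=1..n. f (x n k))) \<longlonglongrightarrow> integral (cbox 0 One) f))"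

end

(*
  Since the order is kappa, some nonzero integer vector h has <h, gamma^(kappa+1)> = 0 on [0,1],
  so by Taylor's theorem <h, gamma x> = P x for a real polynomial P of degree at most kappa.
  For n = s^(kappa+1), Dirichlet's simultaneous approximation theorem with denominator n^kappa * s
  gives an integer 1 <= M <= (n^kappa * s)^(kappa+1) = n^(kappa*(kappa+1)+1) such that M times each
  coefficient of P is within 1/(n^kappa * s) of an integer. Then, for rho_n = n^kappa * M and k <= n,
  rho_n * P(k/n) lies within (kappa+1)/s of an integer. So the averages of the character
  cos(2 pi <h, x>) over the points rho_n * gamma(k/n) tend to 1 along n = s^(kappa+1), although its
  integral over the torus is less than 1.
*)

theory Submission
  imports Defs "HOL-Analysis.Kronecker_Approximation_Theorem" "HOL-Real_Asymp.Real_Asymp"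
begin

lemma power_series_centered_has_real_derivative:
  fixes a :: "nat \<Rightarrow> real"
  assumes sums: "\<And>y. \<bar>y - x\<bar> < r \<Longrightarrow> (\<lambda>n. a n * (y - x) ^ n) sums f y"
    and y: "\<bar>y - x\<bar> < r"
  shows "(f has_real_derivative (\<Sum>n. diffs a n * (y - x) ^ n)) (at y)"
    and "summable (\<lambda>n. diffs a n * (y - x) ^ n)"
proof -
  have sums_shifted: "(\<lambda>n. a n * z ^ n) sums f (x + z)" if "norm z < r" for z
    using sums[of "x + z"] that by simp
  have "((\<lambda>z. \<Sum>n. a n * z ^ n) has_real_derivative (\<Sum>n. diffs a n * (y - x) ^ n)) (at (y - x))"
    by (rule termdiffs_strong'[where K = r]) (use sums_shifted sums_summable y in auto)
  then have "((\<lambda>z. f (x + z)) has_real_derivative (\<Sum>n. diffs a n * (y - x) ^ n)) (at (y - x))"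
    by (rule has_field_derivative_transform_within_open[of _ _ _ "ball 0 r"])
       (use y sums_shifted in \<open>auto simp: dist_norm sums_iff\<close>)
  then show "(f has_real_derivative (\<Sum>n. diffs a n * (y - x) ^ n)) (at y)"
    using DERIV_shift[of "\<lambda>z. f (x + z)" _ y "-x"] by simp
  show "summable (\<lambda>n. diffs a n * (y - x) ^ n)"
    by (rule termdiff_converges[where K = r]) (use y sums_shifted sums_summable in auto)
qed

lemma real_analytic_on_imp_has_real_derivative:
  assumes "real_analytic_on f U" "x \<in> U"
  shows "(f has_real_derivative deriv f x) (at x)"
proof -
  obtain r a where "r > 0" "\<And>y. \<bar>y - x\<bar> < r \<Longrightarrow> (\<lambda>n. a n * (y - x) ^ n) sums f y"
    using assms unfolding real_analytic_on_def by blast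
  then show ?thesis
    using power_series_centered_has_real_derivative(1)[of x r a f x] DERIV_imp_deriv by fastforce
qed

lemma real_analytic_on_deriv:
  assumes "real_analytic_on f U"
  shows "real_analytic_on (deriv f) U"
  unfolding real_analytic_on_def
proof
  fix x assume "x \<in> U"
  then obtain r a where "r > 0" and sums: "\<And>y. \<bar>y - x\<bar> < r \<Longrightarrow> (\<lambda>n. a n * (y - x) ^ n) sums f y"
    using assms unfolding real_analytic_on_def by blast
  have "(\<lambda>n. diffs a n * (y - x) ^ n) sums deriv f y" if "\<bar>y - x\<bar> < r" for y
    using power_series_centered_has_real_derivative[OF sums that] DERIV_imp_deriv summable_sums by metis
  with \<open>r > 0\<close> show "\<exists>r>0. \<exists>a. \<forall>y. \<bar>y - x\<bar> < r \<longrightarrow> (\<lambda>n. a n * (y - x) ^ n) sums deriv f y"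
    by blast
qed

lemma real_analytic_on_higher_deriv:
  assumes "real_analytic_on f U"
  shows "real_analytic_on ((deriv ^^ m) f) U"
  by (induction m) (use assms real_analytic_on_deriv in auto)

lemma Taylor_polynomial_if_higher_deriv_vanishes:
  fixes diff :: "nat \<Rightarrow> real \<Rightarrow> real"
  assumes deriv: "\<And>m t. m \<le> \<kappa> \<Longrightarrow> a \<le> t \<Longrightarrow> t \<le> x \<Longrightarrow> (diff m has_real_derivative diff (Suc m) t) (at t)"
    and vanish: "\<And>t. a \<le> t \<Longrightarrow> t \<le> x \<Longrightarrow> diff (Suc \<kappa>) t = 0"
    and "a \<le> x"
  shows "diff 0 x = (\<Sum>m\<le>\<kappa>. diff m a / fact m * (x - a) ^ m)"
proof (cases "x = a")
  case True
  then show ?thesis by (simp add: power_0_left atMost_atLeast0 sum.atLeast_Suc_atMost)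
next
  case False
  with \<open>a \<le> x\<close> obtain t where "a < t" "t < x"
    and "diff 0 x = (\<Sum>m<Suc \<kappa>. diff m a / fact m * (x - a) ^ m)
                     + diff (Suc \<kappa>) t / fact (Suc \<kappa>) * (x - a) ^ Suc \<kappa>"
    using Taylor_up[of "Suc \<kappa>" diff "diff 0" a x a] deriv by fastforce
  with vanish show ?thesis by (simp add: lessThan_Suc_atMost)
qed

lemma analytic_curve_inner_polynomial:
  fixes \<gamma> :: "real \<Rightarrow> real ^ 'd" and v :: "real ^ 'd"
  assumes "analytic_curve \<gamma>"
    and vanish: "\<forall>t\<in>{0..1}. v \<bullet> curve_deriv (Suc \<kappa>) \<gamma> t = 0"
  shows "\<exists>c. \<forall>x\<in>{0..1}. v \<bullet> \<gamma> x = (\<Sum>m\<le>\<kappa>. c m * x ^ m)"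
proof -
  obtain U where U: "{0..1} \<subseteq> U" "\<And>i. real_analytic_on (\<lambda>t. \<gamma> t $ i) U"
    using assms(1) unfolding analytic_curve_def by blast
  define D where "D m t = v \<bullet> curve_deriv m \<gamma> t" for m t
  have "(D m has_real_derivative D (Suc m) t) (at t)" if "t \<in> {0..1}" for m t
    unfolding D_def curve_deriv_def inner_vec_def
    using U that by (auto intro!: DERIV_sum DERIV_cmult real_analytic_on_imp_has_real_derivative real_analytic_on_higher_deriv)
  then have "D 0 x = (\<Sum>m\<le>\<kappa>. D m 0 / fact m * x ^ m)" if "x \<in> {0..1}" for x
    using Taylor_polynomial_if_higher_deriv_vanishes[of \<kappa> 0 x D] vanish that by (auto simp: D_def)
  moreover have "D 0 x = v \<bullet> \<gamma> x" for x
    by (simp add: D_def curve_deriv_def)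
  ultimately show ?thesis
    by (intro exI[of _ "\<lambda>m. D m 0 / fact m"]) auto
qed

lemma simultaneous_approx_at_perfect_power:
  fixes c :: "nat \<Rightarrow> real" and n :: nat
  assumes "n \<ge> 1"
  shows "\<exists>M::int. 1 \<le> M \<and> M \<le> int n ^ (\<kappa> * Suc \<kappa> + 1) \<and>
           (\<forall>s. n = s ^ Suc \<kappa> \<longrightarrow>
              (\<exists>p. \<forall>i\<le>\<kappa>. \<bar>of_int M * c i - of_int (p i)\<bar> < 1 / (real n ^ \<kappa> * real s)))"
proof (cases "\<exists>s. n = s ^ Suc \<kappa>")
  case True
  then obtain s where n: "n = s ^ Suc \<kappa>" by blast
  with assms have "n ^ \<kappa> * s > 0" by (simp add: gr0I)
  then obtain M p where "0 < M" "M \<le> int ((n ^ \<kappa> * s) ^ Suc \<kappa>)"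
    and approx: "\<And>i. i < Suc \<kappa> \<Longrightarrow> \<bar>of_int M * c i - of_int (p i)\<bar> < 1 / real (n ^ \<kappa> * s)"
    using Dirichlet_approx_simult[where \<theta> = c and n = "Suc \<kappa>"] by blast
  moreover have "(n ^ \<kappa> * s) ^ Suc \<kappa> = n ^ (\<kappa> * Suc \<kappa> + 1)"
    unfolding power_mult_distrib n[symmetric] by (simp flip: power_mult power_add)
  moreover have "s' = s" if "n = s' ^ Suc \<kappa>" for s'
    using that n by (metis power_inject_base zero_less_Suc zero_le)
  ultimately show ?thesis
    by (intro exI[of _ M]) (auto simp del: power_Suc intro!: exI[of _ p] approx)
next
  case False
  moreover have "1 \<le> int n ^ (\<kappa> * Suc \<kappa> + 1)"
    using assms by (intro one_le_power) simp
  ultimately show ?thesis by (intro exI[of _ 1]) auto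
qed

lemma Dirichlet_multipliers_at_perfect_powers:
  fixes c :: "nat \<Rightarrow> real"
  obtains M :: "nat \<Rightarrow> int"
  where "\<And>n. n \<ge> 1 \<Longrightarrow> 1 \<le> M n \<and> M n \<le> int n ^ (\<kappa> * Suc \<kappa> + 1)"
    and "\<And>s. s \<ge> 1 \<Longrightarrow> \<exists>p. \<forall>i\<le>\<kappa>.
           \<bar>of_int (M (s ^ Suc \<kappa>)) * c i - of_int (p i)\<bar> < 1 / (real (s ^ Suc \<kappa>) ^ \<kappa> * real s)"
proof -
  obtain M :: "nat \<Rightarrow> int" where "\<forall>n\<ge>1. 1 \<le> M n \<and> M n \<le> int n ^ (\<kappa> * Suc \<kappa> + 1) \<and>
      (\<forall>s. n = s ^ Suc \<kappa> \<longrightarrow>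
         (\<exists>p. \<forall>i\<le>\<kappa>. \<bar>of_int (M n) * c i - of_int (p i)\<bar> < 1 / (real n ^ \<kappa> * real s)))"
    using simultaneous_approx_at_perfect_power[of _ \<kappa> c] by metis
  with that show thesis
    using one_le_power[of _ "Suc \<kappa>"] by (metis (no_types, lifting))
qed

lemma scaling_bounds:
  fixes M :: int
  assumes "1 \<le> M" "M \<le> int n ^ (\<kappa> * Suc \<kappa> + 1)"
  shows "real n ^ \<kappa> \<le> real n ^ \<kappa> * of_int M \<and> real n ^ \<kappa> * of_int M \<le> real n ^ ((\<kappa> + 1)^2)"
proof -
  have "real_of_int M \<le> real n ^ (\<kappa> * Suc \<kappa> + 1)"
    using assms(2) by (metis of_int_le_iff of_int_of_nat_eq of_int_power)
  then have "real n ^ \<kappa> * of_int M \<le> real n ^ \<kappa> * real n ^ (\<kappa> * Suc \<kappa> + 1)"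
    by (intro mult_left_mono) auto
  also have "\<dots> = real n ^ ((\<kappa> + 1)^2)"
    by (simp add: power2_eq_square flip: power_add)
  moreover have "real n ^ \<kappa> * 1 \<le> real n ^ \<kappa> * of_int M"
    using assms(1) by (intro mult_left_mono) auto
  ultimately show ?thesis by simp
qed

lemma scaled_polynomial_near_integer:
  fixes c :: "nat \<Rightarrow> real" and p :: "nat \<Rightarrow> int" and k n :: nat
  assumes "0 < n" "k \<le> n"
    and approx: "\<And>i. i \<le> \<kappa> \<Longrightarrow> \<bar>M * c i - of_int (p i)\<bar> \<le> \<delta>"
  shows "\<bar>real n ^ \<kappa> * M * (\<Sum>m\<le>\<kappa>. c m * (real k / real n) ^ m)
           - of_int (\<Sum>m\<le>\<kappa>. p m * int k ^ m * int n ^ (\<kappa> - m))\<bar> \<le> real (Suc \<kappa>) * \<delta> * real n ^ \<kappa>"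
proof -
  define w where "w m = real k ^ m * real n ^ (\<kappa> - m)" for m
  have w_le: "0 \<le> w m \<and> w m \<le> real n ^ \<kappa>" if "m \<le> \<kappa>" for m
  proof -
    have "w m \<le> real n ^ m * real n ^ (\<kappa> - m)"
      unfolding w_def using \<open>k \<le> n\<close> by (intro mult_right_mono power_mono) auto
    with that show ?thesis by (simp add: w_def flip: power_add)
  qed
  have "real n ^ \<kappa> * (real k / real n) ^ m = w m" if "m \<le> \<kappa>" for m
    using that \<open>0 < n\<close> by (simp add: w_def power_divide field_simps flip: power_add)
  then have "real n ^ \<kappa> * M * (\<Sum>m\<le>\<kappa>. c m * (real k / real n) ^ m) = (\<Sum>m\<le>\<kappa>. M * c m * w m)"
    by (simp add: sum_distrib_left mult_ac)
  moreover have "of_int (\<Sum>m\<le>\<kappa>. p m * int k ^ m * int n ^ (\<kappa> - m)) = (\<Sum>m\<le>\<kappa>. of_int (p m) * w m)"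
    by (simp add: w_def mult.assoc)
  ultimately have "real n ^ \<kappa> * M * (\<Sum>m\<le>\<kappa>. c m * (real k / real n) ^ m)
           - of_int (\<Sum>m\<le>\<kappa>. p m * int k ^ m * int n ^ (\<kappa> - m))
        = (\<Sum>m\<le>\<kappa>. (M * c m - of_int (p m)) * w m)"
    by (simp add: left_diff_distrib sum_subtractf)
  also have "\<bar>\<dots>\<bar> \<le> (\<Sum>m\<le>\<kappa>. \<bar>(M * c m - of_int (p m)) * w m\<bar>)"
    by (rule sum_abs)
  also have "\<dots> \<le> (\<Sum>m\<le>\<kappa>. \<delta> * real n ^ \<kappa>)"
    using approx w_le order_trans[OF abs_ge_zero approx[of 0]]
    by (intro sum_mono) (auto simp: abs_mult intro!: mult_mono)
  finally show ?thesis by simp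
qed

lemma cos_2pi_ge_if_near_int:
  assumes "\<bar>v - of_int z\<bar> \<le> \<delta>" "\<delta> \<le> 1 / 2"
  shows "cos (2 * pi * \<delta>) \<le> cos (2 * pi * v)"
proof (rule cos_monotone_aux)
  have "\<bar>2 * pi * of_int (- z) + 2 * pi * v\<bar> = 2 * pi * \<bar>v - of_int z\<bar>"
    by (simp add: abs_mult flip: right_diff_distrib')
  also have "\<dots> \<le> 2 * pi * \<delta>"
    using assms(1) by simp
  finally show "\<bar>2 * pi * of_int (- z) + 2 * pi * v\<bar> \<le> 2 * pi * \<delta>" .
  show "2 * pi * \<delta> \<le> pi"
    using assms(2) by simp
qed

lemma average_cos_scaled_polynomial_ge:
  fixes c :: "nat \<Rightarrow> real" and p :: "nat \<Rightarrow> int" and s :: nat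
  assumes poly: "\<forall>x\<in>{0..1}. g x = (\<Sum>m\<le>\<kappa>. c m * x ^ m)"
    and n: "n = s ^ Suc \<kappa>" and s: "2 * Suc \<kappa> \<le> s"
    and approx: "\<forall>i\<le>\<kappa>. \<bar>M * c i - of_int (p i)\<bar> < 1 / (real n ^ \<kappa> * real s)"
  shows "cos (2 * pi * real (Suc \<kappa>) / real s)
           \<le> 1 / real n * (\<Sum>k=1..n. cos (2 * pi * (real n ^ \<kappa> * M * g (real k / real n))))"
proof -
  have "0 < n" using n s by simp
  have term_ge: "cos (2 * pi * real (Suc \<kappa>) / real s) \<le> cos (2 * pi * (real n ^ \<kappa> * M * g (real k / real n)))"
    if "k \<in> {1..n}" for k
  proof -
    have "real k / real n \<in> {0..1}" using that by auto
    with poly have g: "g (real k / real n) = (\<Sum>m\<le>\<kappa>. c m * (real k / real n) ^ m)" by blast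
    have "\<bar>real n ^ \<kappa> * M * g (real k / real n)
             - of_int (\<Sum>m\<le>\<kappa>. p m * int k ^ m * int n ^ (\<kappa> - m))\<bar>
          \<le> real (Suc \<kappa>) * (1 / (real n ^ \<kappa> * real s)) * real n ^ \<kappa>"
      unfolding g using \<open>0 < n\<close> that approx by (intro scaled_polynomial_near_integer) auto
    also have "\<dots> = real (Suc \<kappa>) / real s"
      using \<open>0 < n\<close> by simp
    finally have "cos (2 * pi * (real (Suc \<kappa>) / real s))
                    \<le> cos (2 * pi * (real n ^ \<kappa> * M * g (real k / real n)))"
      by (rule cos_2pi_ge_if_near_int) (use s in \<open>simp add: field_simps\<close>)
    then show ?thesis by simp
  qed
  have "real n * cos (2 * pi * real (Suc \<kappa>) / real s)
          \<le> (\<Sum>k=1..n. cos (2 * pi * (real n ^ \<kappa> * M * g (real k / real n))))"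
    using sum_mono[of "{1..n}", OF term_ge] by simp
  with \<open>0 < n\<close> show ?thesis by (simp add: field_simps)
qed

lemma average_cos_scaled_polynomial_tendsto_one:
  fixes c :: "nat \<Rightarrow> real" and M \<rho> :: "nat \<Rightarrow> real"
  assumes poly: "\<forall>x\<in>{0..1}. g x = (\<Sum>m\<le>\<kappa>. c m * x ^ m)"
    and \<rho>: "\<And>n. \<rho> n = real n ^ \<kappa> * M n"
    and approx: "\<And>s. s \<ge> 1 \<Longrightarrow> \<exists>p::nat \<Rightarrow> int. \<forall>i\<le>\<kappa>.
                   \<bar>M (s ^ Suc \<kappa>) * c i - of_int (p i)\<bar> < 1 / (real (s ^ Suc \<kappa>) ^ \<kappa> * real s)"
  shows "(\<lambda>j. 1 / real (Suc j ^ Suc \<kappa>) * (\<Sum>k=1..Suc j ^ Suc \<kappa>.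
             cos (2 * pi * (\<rho> (Suc j ^ Suc \<kappa>) * g (real k / real (Suc j ^ Suc \<kappa>))))))
         \<longlonglongrightarrow> 1"
    (is "?avg \<longlonglongrightarrow> 1")
proof (rule tendsto_sandwich)
  show "(\<lambda>j. cos (2 * pi * real (Suc \<kappa>) / real (Suc j))) \<longlonglongrightarrow> 1"
    by real_asymp
  show "\<forall>\<^sub>F j in sequentially. cos (2 * pi * real (Suc \<kappa>) / real (Suc j)) \<le> ?avg j"
  proof (rule eventually_sequentiallyI[of "2 * Suc \<kappa>"])
    fix j assume "2 * Suc \<kappa> \<le> j"
    obtain p where "\<forall>i\<le>\<kappa>. \<bar>M (Suc j ^ Suc \<kappa>) * c i - of_int (p i)\<bar>
                       < 1 / (real (Suc j ^ Suc \<kappa>) ^ \<kappa> * real (Suc j))"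
      using approx[of "Suc j"] by auto
    with \<open>2 * Suc \<kappa> \<le> j\<close> show "cos (2 * pi * real (Suc \<kappa>) / real (Suc j)) \<le> ?avg j"
      unfolding \<rho> by (intro average_cos_scaled_polynomial_ge[OF poly, of _ "Suc j"]) auto
  qed
  have "?avg j \<le> 1" for j
  proof -
    have "?avg j \<le> 1 / real (Suc j ^ Suc \<kappa>) * (\<Sum>k=1..Suc j ^ Suc \<kappa>. 1)"
      by (intro mult_left_mono sum_mono) auto
    then show ?thesis by (simp del: power_Suc)
  qed
  then show "\<forall>\<^sub>F j in sequentially. ?avg j \<le> 1"
    by simp
qed (rule tendsto_const)

lemma integral_less_if_le_and_less_somewhere:
  fixes f :: "'a::euclidean_space \<Rightarrow> real"
  assumes cont: "continuous_on (cbox a b) f" and le: "\<And>y. y \<in> cbox a b \<Longrightarrow> f y \<le> C"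
    and "x0 \<in> cbox a b" "f x0 < C" "box a b \<noteq> {}"
  shows "integral (cbox a b) f < C * measure lborel (cbox a b)"
proof -
  have gap: "((\<lambda>y. C - f y) has_integral (C * measure lborel (cbox a b) - integral (cbox a b) f)) (cbox a b)"
    using has_integral_diff[OF has_integral_const[of C a b] integrable_integral[OF integrable_continuous[OF cont]]]
    by (simp add: mult.commute)
  have "C - f x0 = 0" if "C * measure lborel (cbox a b) - integral (cbox a b) f = 0"
  proof (rule has_integral_0_cbox_imp_0[where f = "\<lambda>y. C - f y"])
    show "continuous_on (cbox a b) (\<lambda>y. C - f y)"
      using cont by (intro continuous_intros)
    show "0 \<le> C - f y" if "y \<in> box a b" for y
      using le that box_subset_cbox by force
  qed (use gap that assms(3,5) in auto)
  with \<open>f x0 < C\<close> have "integral (cbox a b) f \<noteq> C * measure lborel (cbox a b)"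
    by auto
  moreover have "integral (cbox a b) f \<le> integral (cbox a b) (\<lambda>_. C)"
    using cont le by (intro integral_le integrable_continuous) auto
  ultimately show ?thesis
    by (simp add: mult.commute)
qed

lemma not_equidistributes_if_subseq_averages_tendsto_one:
  fixes f :: "real ^ 'd \<Rightarrow> real" and x :: "nat \<Rightarrow> nat \<Rightarrow> real ^ 'd"
  assumes cont: "continuous_on UNIV f" and "torus_periodic f"
    and le: "\<And>y. f y \<le> 1" and "x0 \<in> cbox 0 One" "f x0 < 1"
    and "strict_mono \<phi>"
    and lim: "(\<lambda>j. 1 / real (\<phi> j) * (\<Sum>k=1..\<phi> j. f (x (\<phi> j) k))) \<longlonglongrightarrow> 1"
  shows "\<not> equidistributes x"
proof
  assume "equidistributes x"
  with cont \<open>torus_periodic f\<close>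
  have "(\<lambda>n. 1 / real n * (\<Sum>k=1..n. f (x n k))) \<longlonglongrightarrow> integral (cbox 0 One) f"
    unfolding equidistributes_def by blast
  from LIMSEQ_subseq_LIMSEQ[OF this \<open>strict_mono \<phi>\<close>] lim
  have "integral (cbox 0 One) f = 1"
    by (simp add: comp_def LIMSEQ_unique)
  moreover have "box 0 (One :: real ^ 'd) \<noteq> {}"
    by (simp add: box_ne_empty inner_Basis)
  then have "integral (cbox 0 One) f < 1"
    using integral_less_if_le_and_less_somewhere[of 0 One f 1 x0] continuous_on_subset[OF cont] le assms(4,5)
    by simp
  ultimately show False by simp
qed

abbreviation of_int_vec :: "int ^ 'd \<Rightarrow> real ^ 'd" where
  "of_int_vec h \<equiv> \<chi> i. real_of_int (h $ i)"

lemma torus_periodic_cos_inner_int_vec: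
  fixes h :: "int ^ 'd"
  shows "torus_periodic (\<lambda>x. cos (2 * pi * (of_int_vec h \<bullet> x)))"
  unfolding torus_periodic_def
proof (intro allI)
  fix x :: "real ^ 'd" and z :: "int ^ 'd"
  have "of_int_vec h \<bullet> (x + of_int_vec z) = of_int_vec h \<bullet> x + of_int (\<Sum>i\<in>UNIV. h $ i * z $ i)"
    by (simp add: inner_add_right inner_vec_def distrib_left sum.distrib)
  then show "cos (2 * pi * (of_int_vec h \<bullet> (x + of_int_vec z))) = cos (2 * pi * (of_int_vec h \<bullet> x))"
    using sin_cos_eq_iff by (metis distrib_left)
qed

lemma cos_inner_int_vec_attains_minus_one:
  fixes h :: "int ^ 'd"
  assumes "h \<noteq> 0"
  shows "\<exists>x0\<in>cbox 0 One. cos (2 * pi * (of_int_vec h \<bullet> x0)) = -1"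
proof -
  obtain j where hj: "h $ j \<noteq> 0"
    using assms by (metis vec_eq_iff zero_index)
  define x0 :: "real ^ 'd" where "x0 = axis j (1 / (2 * \<bar>real_of_int (h $ j)\<bar>))"
  have "1 \<le> \<bar>real_of_int (h $ j)\<bar>"
    using hj by linarith
  then have "x0 \<in> cbox 0 One"
    by (auto simp: x0_def mem_box_cart axis_def field_simps simp flip: Cart_1)
  moreover have "of_int_vec h \<bullet> x0 = 1 / 2 \<or> of_int_vec h \<bullet> x0 = - 1 / 2"
    using hj by (simp add: x0_def inner_axis abs_if)
  then have "cos (2 * pi * (of_int_vec h \<bullet> x0)) = -1"
    by (elim disjE; simp only:; simp)
  ultimately show ?thesis by blast
qed

theorem theorem1p3:
  fixes \<gamma> :: "real \<Rightarrow> real ^ 'd" and \<kappa> :: nat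
  assumes "analytic_curve \<gamma>"
    and "rat_nondeg_order \<gamma> \<kappa>"
  shows "\<exists>\<rho> :: nat \<Rightarrow> real.
           (\<forall>n\<ge>1. real n ^ \<kappa> \<le> \<rho> n \<and> \<rho> n \<le> real n ^ ((\<kappa> + 1)^2)) \<and>
           \<not> equidistributes (\<lambda>n k. \<rho> n *\<^sub>R \<gamma> (real k / real n))"
proof -
  obtain h :: "int ^ 'd" where "h \<noteq> 0"
    and vanish: "\<forall>t\<in>{0..1}. of_int_vec h \<bullet> curve_deriv (Suc \<kappa>) \<gamma> t = 0"
    using assms(2) unfolding rat_nondeg_order_def nondeg_at_def by auto
  obtain c where poly: "\<forall>x\<in>{0..1}. of_int_vec h \<bullet> \<gamma> x = (\<Sum>m\<le>\<kappa>. c m * x ^ m)"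
    using analytic_curve_inner_polynomial[OF assms(1) vanish] by blast
  obtain M :: "nat \<Rightarrow> int" where M_bounds: "\<And>n. n \<ge> 1 \<Longrightarrow> 1 \<le> M n \<and> M n \<le> int n ^ (\<kappa> * Suc \<kappa> + 1)"
    and M_approx: "\<And>s. s \<ge> 1 \<Longrightarrow> \<exists>p. \<forall>i\<le>\<kappa>.
           \<bar>of_int (M (s ^ Suc \<kappa>)) * c i - of_int (p i)\<bar> < 1 / (real (s ^ Suc \<kappa>) ^ \<kappa> * real s)"
    using Dirichlet_multipliers_at_perfect_powers by metis
  obtain x0 where x0: "x0 \<in> cbox 0 One" "cos (2 * pi * (of_int_vec h \<bullet> x0)) = -1"
    using cos_inner_int_vec_attains_minus_one[OF \<open>h \<noteq> 0\<close>] by blast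
  define \<rho> where "\<rho> n = real n ^ \<kappa> * of_int (M n)" for n
  have bounds: "\<forall>n\<ge>1. real n ^ \<kappa> \<le> \<rho> n \<and> \<rho> n \<le> real n ^ ((\<kappa> + 1)^2)"
    using M_bounds scaling_bounds unfolding \<rho>_def by blast
  have "strict_mono (\<lambda>j. Suc j ^ Suc \<kappa>)"
    by (intro strict_monoI power_strict_mono) auto
  with average_cos_scaled_polynomial_tendsto_one[OF poly \<rho>_def M_approx] x0
  have "\<not> equidistributes (\<lambda>n k. \<rho> n *\<^sub>R \<gamma> (real k / real n))"
    by (intro not_equidistributes_if_subseq_averages_tendsto_one
          [where f = "\<lambda>x. cos (2 * pi * (of_int_vec h \<bullet> x))" and \<phi> = "\<lambda>j. Suc j ^ Suc \<kappa>"])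
       (auto intro!: continuous_intros torus_periodic_cos_inner_int_vec)
  with bounds show ?thesis by blast
qed

end
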